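(* Let $k$ be a field of characteristic not $2$, $R,S$ $k$-algebras and $\tau:S\otimes R\to R\otimes S$ a twisting map. Let $C_\bullet,C'_\bullet$ be $R$-bimodule resolutions of $R$ and $D_\bullet,D'_\bullet$ be $S$-bimodule resolutions of $S$, all compatible with $\tau$, and let $\psi_R:C_\bullet\to C'_\bullet$ and $\psi_S:D_\bullet\to D'_\bullet$ be chain maps of bimodule resolutions (lifting the identity) that are compatible with $\tau$. Then $\psi_R\otimes\psi_S:C_\bullet\otimes_\tau D_\bullet\to C'_\bullet\otimes_\tau D'_\bullet$ is a chain map of bimodule resolutions of $R\otimes_\tau S$ (lifting the identity on $R\otimes_\tau S$).
   Context: Tensor products are over $k$, with the Koszul sign convention for graded maps. A twisting map is a bijective $k$-linear $\tau:S\otimes R\to R\otimes S$ with $\tau(1_S\otimes r)=r\otimes1_S$, $\tau(s\otimes1_R)=1_R\otimes s$ and $\tau(m_S\otimes m_R)=(m_R\otimes m_S)(1\otimes\tau\otimes1)(\tau\otimes\tau)(1\otimes\tau\otimes1)$; $R\otimes_\tau S$ is $R\otimes S$ with multiplication $(m_R\otimes m_S)(1\otimes\tau\otimes1)$. A bimodule resolution of an algebra $A$ is a complex of $A$-bimodules $P_\bullet$ ($n\ge0$) with augmentation $P_0\to A$ making the augmented complex exact; a chain map of resolutions commutes with differentials and augmentations (lifts the identity of $A$). An $R$-bimodule resolution $C_\bullet$ of $R$ with action $\rho_C:R\otimes C\otimes R\to C$ is compatible with $\tau$ via a bijective chain map $\tau_C:S\otimes C_\bullet\to C_\bullet\otimes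 S$ lifting $\tau$ (in augmentation degree) such that $\tau_C(m_S\otimes1)=(1\otimes m_S)(\tau_C\otimes1)(1\otimes\tau_C)$ and $\tau_C(1\otimes\rho_C)=(\rho_C\otimes1)(1\otimes1\otimes\tau)(1\otimes\tau_C\otimes1)(\tau\otimes1\otimes1)$. An $S$-bimodule resolution $D_\bullet$ of $S$ with action $\rho_D$ is compatible with $\tau$ via a bijective chain map $\tau_D:D_\bullet\otimes R\to R\otimes D_\bullet$ lifting $\tau$ such that $\tau_D(1\otimes m_R)=(m_R\otimes1)(1\otimes\tau_D)(\tau_D\otimes1)$ and $\tau_D(\rho_D\otimes1)=(1\otimes\rho_D)(\tau\otimes1\otimes1)(1\otimes\tau_D\otimes1)(1\otimes1\otimes\tau)$ on $S\otimes D\otimes S\otimes R$. A chain map $\psi:C_\bullet\to C'_\bullet$ of compatible $R$-bimodule resolutions is compatible with $\tau$ if $(\psi\otimes1_S)\tau_C=\tau_{C'}(1_S\otimes\psi)$; a chain map $\psi:D_\bullet\to D'_\bullet$ of compatible $S$-bimodule resolutions is compatible with $\tau$ if $(1_R\otimes\psi)\tau_D=\tau_{D'}(\psi\otimes1_R)$. The twisted product resolution $C_\bullet\otimes_\tau D_\bullet$ is the total complex with $n$-th term $\bigoplus_{i+j=n}C_i\otimes D_j$, differential $\partial_C\otimes1+1\otimes\partial_D$, augmentation to $R\otimes S$ from those of $C_0$, $D_0$, and $(R\otimes_\tau S)$-bimodule structure $(\rho_C\otimes\rho_D)(1\otimes1\otimes\tau\otimes1\otimes1)(1\otimes\tau_C\otimes\tau_D\otimes1)$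 on $(R\otimes S)\otimes C_i\otimes D_j\otimes(R\otimes S)$; it is a bimodule resolution of $R\otimes_\tau S$. *)

theory Defs
  imports "HOL-Library.Poly_Mapping"
begin

text \<open>Every k-vector space has a basis, so we model a k-vector space with basis
  type 'b as the finitely supported functions from 'b to 'k.  The tensor product
  of the spaces with bases 'a and 'b is the space with basis 'a \<times> 'b.
  A k-linear map between such spaces is determined by the images of basis
  vectors; we represent it by that function (type lm).  n-fold tensor
  products are right-nested: A\<otimes>B\<otimes>C has basis 'a \<times> ('b \<times> 'c); the associators
  asl/asr (and the explicit regroupings below) are the canonical isomorphisms.\<close>

type_synonym ('a,'b,'k) lm = "'a \<Rightarrow> ('b \<Rightarrow>\<^sub>0 'k)"

definition smul :: "'k::field \<Rightarrow> ('b \<Rightarrow>\<^sub>0 'k) \<Rightarrow> ('b \<Rightarrow>\<^sub>0 'k)" where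
  "smul c u = Poly_Mapping.map (\<lambda>x. c * x) u"

definition basis :: "'a \<Rightarrow> ('a \<Rightarrow>\<^sub>0 'k::field)" where
  "basis a = Poly_Mapping.single a 1"

definition ext :: "('a,'b,'k::field) lm \<Rightarrow> ('a \<Rightarrow>\<^sub>0 'k) \<Rightarrow> ('b \<Rightarrow>\<^sub>0 'k)" where
  "ext f u = (\<Sum>a\<in>Poly_Mapping.keys u. smul (Poly_Mapping.lookup u a) (f a))"

definition tens :: "('a \<Rightarrow>\<^sub>0 'k::field) \<Rightarrow> ('b \<Rightarrow>\<^sub>0 'k) \<Rightarrow> ('a \<times> 'b \<Rightarrow>\<^sub>0 'k)" where
  "tens u v = (\<Sum>a\<in>Poly_Mapping.keys u. \<Sum>b\<in>Poly_Mapping.keys v. Poly_Mapping.single (a,b) (Poly_Mapping.lookup u a * Poly_Mapping.lookup v b))"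

definition compL :: "('b,'c,'k::field) lm \<Rightarrow> ('a,'b,'k) lm \<Rightarrow> ('a,'c,'k) lm" (infixl "\<circ>L" 55) where
  "g \<circ>L f = (\<lambda>a. ext g (f a))"

definition idL :: "('a,'a,'k::field) lm" where
  "idL = basis"

text \<open>Tensor product of linear maps of degree 0 (no Koszul sign arises).\<close>
definition tensL :: "('a,'c,'k::field) lm \<Rightarrow> ('b,'d,'k) lm \<Rightarrow> ('a \<times> 'b, 'c \<times> 'd, 'k) lm"
  (infixr "\<otimes>L" 70) where
  "f \<otimes>L g = (\<lambda>(a,b). tens (f a) (g b))"

definition asl :: "('a \<times> ('b \<times> 'c), ('a \<times> 'b) \<times> 'c, 'k::field) lm" where
  "asl = (\<lambda>(a,(b,c)). basis ((a,b),c))"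

definition asr :: "(('a \<times> 'b) \<times> 'c, 'a \<times> ('b \<times> 'c), 'k::field) lm" where
  "asr = (\<lambda>((a,b),c). basis (a,(b,c)))"

text \<open>1 \<otimes> f \<otimes> 1 on A\<otimes>B\<otimes>C\<otimes>D, f acting on B\<otimes>C.\<close>
definition mid4 :: "('b \<times> 'c, 'x \<times> 'y, 'k::field) lm \<Rightarrow>
    ('a \<times> ('b \<times> ('c \<times> 'd)), 'a \<times> ('x \<times> ('y \<times> 'd)), 'k) lm" where
  "mid4 f = idL \<otimes>L (asr \<circ>L (f \<otimes>L idL) \<circ>L asl)"

definition homog :: "('c \<Rightarrow> nat) \<Rightarrow> nat \<Rightarrow> ('c \<Rightarrow>\<^sub>0 'k::field) \<Rightarrow> bool" where
  "homog deg n u \<longleftrightarrow> (\<forall>c\<in>Poly_Mapping.keys u. deg c = n)"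

definition k_algebra :: "('a \<times> 'a, 'a, 'k::field) lm \<Rightarrow> ('a \<Rightarrow>\<^sub>0 'k) \<Rightarrow> bool" where
  "k_algebra m u \<longleftrightarrow>
     m \<circ>L (m \<otimes>L idL) \<circ>L asl = m \<circ>L (idL \<otimes>L m) \<and>
     (\<forall>a. ext m (tens u (basis a)) = basis a \<and> ext m (tens (basis a) u) = basis a)"

definition bim_grp :: "(('a \<times> 'a) \<times> ('m \<times> ('a \<times> 'a)), 'a \<times> (('a \<times> ('m \<times> 'a)) \<times> 'a), 'k::field) lm" where
  "bim_grp = (\<lambda>((a1,a2),(x,(a3,a4))). basis (a1,((a2,(x,a3)),a4)))"

definition bimodule :: "('a \<times> 'a, 'a, 'k::field) lm \<Rightarrow> ('a \<Rightarrow>\<^sub>0 'k) \<Rightarrow>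
    ('a \<times> ('m \<times> 'a), 'm, 'k) lm \<Rightarrow> bool" where
  "bimodule m u rho \<longleftrightarrow>
     rho \<circ>L (m \<otimes>L (idL \<otimes>L m)) = rho \<circ>L (idL \<otimes>L (rho \<otimes>L idL)) \<circ>L bim_grp \<and>
     (\<forall>x. ext rho (tens u (tens (basis x) u)) = basis x)"

definition reg_act :: "('a \<times> 'a, 'a, 'k::field) lm \<Rightarrow> ('a \<times> ('a \<times> 'a), 'a, 'k) lm" where
  "reg_act m = m \<circ>L (m \<otimes>L idL) \<circ>L asl"

text \<open>A graded space P = \<Oplus>_n P_n (basis 'p, degree function deg) with differential d,
  augmentation e : P_0 \<rightarrow> A and action rho is an A-bimodule resolution of A:
  a complex of A-bimodules (n \<ge> 0) whose augmented complex is exact.\<close>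
definition bimod_resolution :: "('a \<times> 'a, 'a, 'k::field) lm \<Rightarrow> ('a \<Rightarrow>\<^sub>0 'k) \<Rightarrow>
    ('p \<Rightarrow> nat) \<Rightarrow> ('p, 'p, 'k) lm \<Rightarrow> ('p, 'a, 'k) lm \<Rightarrow> ('a \<times> ('p \<times> 'a), 'p, 'k) lm \<Rightarrow> bool" where
  "bimod_resolution m u deg d e rho \<longleftrightarrow>
     bimodule m u rho \<and>
     (\<forall>a x b. homog deg (deg x) (rho (a,(x,b)))) \<and>
     (\<forall>x. homog deg (deg x - 1) (d x)) \<and>
     (\<forall>x. deg x = 0 \<longrightarrow> d x = 0) \<and>
     (\<forall>x. deg x \<noteq> 0 \<longrightarrow> e x = 0) \<and>
     d \<circ>L d = (\<lambda>_. 0) \<and>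
     e \<circ>L d = (\<lambda>_. 0) \<and>
     d \<circ>L rho = rho \<circ>L (idL \<otimes>L (d \<otimes>L idL)) \<and>
     e \<circ>L rho = reg_act m \<circ>L (idL \<otimes>L (e \<otimes>L idL)) \<and>
     (\<forall>y. \<exists>v. homog deg 0 v \<and> ext e v = y) \<and>
     (\<forall>v. homog deg 0 v \<and> ext e v = 0 \<longrightarrow> (\<exists>w. homog deg 1 w \<and> ext d w = v)) \<and>
     (\<forall>n v. n \<ge> 1 \<and> homog deg n v \<and> ext d v = 0 \<longrightarrow> (\<exists>w. homog deg (n+1) w \<and> ext d w = v))"

definition res_map :: "('p \<Rightarrow> nat) \<Rightarrow> ('p, 'p, 'k::field) lm \<Rightarrow> ('p, 'a, 'k) lm \<Rightarrow> ('a \<times> ('p \<times> 'a), 'p, 'k) lm \<Rightarrow>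
    ('q \<Rightarrow> nat) \<Rightarrow> ('q, 'q, 'k) lm \<Rightarrow> ('q, 'a, 'k) lm \<Rightarrow> ('a \<times> ('q \<times> 'a), 'q, 'k) lm \<Rightarrow>
    ('p, 'q, 'k) lm \<Rightarrow> bool" where
  "res_map degP dP eP rhoP degQ dQ eQ rhoQ psi \<longleftrightarrow>
     (\<forall>x. homog degQ (degP x) (psi x)) \<and>
     dQ \<circ>L psi = psi \<circ>L dP \<and>
     eQ \<circ>L psi = eP \<and>
     psi \<circ>L rhoP = rhoQ \<circ>L (idL \<otimes>L (psi \<otimes>L idL))"

definition twisting_map :: "('r \<times> 'r, 'r, 'k::field) lm \<Rightarrow> ('r \<Rightarrow>\<^sub>0 'k) \<Rightarrow>
    ('s \<times> 's, 's, 'k) lm \<Rightarrow> ('s \<Rightarrow>\<^sub>0 'k) \<Rightarrow> ('s \<times> 'r, 'r \<times> 's, 'k) lm \<Rightarrow> bool" where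
  "twisting_map mR uR mS uS tau \<longleftrightarrow>
     bij (ext tau) \<and>
     (\<forall>r. ext tau (tens uS (basis r)) = tens (basis r) uS) \<and>
     (\<forall>s. ext tau (tens (basis s) uR) = tens uR (basis s)) \<and>
     tau \<circ>L (mS \<otimes>L mR) \<circ>L asl =
       (mR \<otimes>L mS) \<circ>L asl \<circ>L mid4 tau \<circ>L asr \<circ>L (tau \<otimes>L tau) \<circ>L asl \<circ>L mid4 tau"

definition compatible_R :: "('r \<times> 'r, 'r, 'k::field) lm \<Rightarrow> ('s \<times> 's, 's, 'k) lm \<Rightarrow>
    ('s \<times> 'r, 'r \<times> 's, 'k) lm \<Rightarrow> ('c \<Rightarrow> nat) \<Rightarrow> ('c, 'c, 'k) lm \<Rightarrow> ('c, 'r, 'k) lm \<Rightarrow>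
    ('r \<times> ('c \<times> 'r), 'c, 'k) lm \<Rightarrow> ('s \<times> 'c, 'c \<times> 's, 'k) lm \<Rightarrow> bool" where
  "compatible_R mR mS tau degC dC eC rhoC tauC \<longleftrightarrow>
     bij (ext tauC) \<and>
     (\<forall>s c. \<forall>p\<in>Poly_Mapping.keys (tauC (s,c)). degC (fst p) = degC c) \<and>
     (dC \<otimes>L idL) \<circ>L tauC = tauC \<circ>L (idL \<otimes>L dC) \<and>
     (eC \<otimes>L idL) \<circ>L tauC = tau \<circ>L (idL \<otimes>L eC) \<and>
     tauC \<circ>L (mS \<otimes>L idL) \<circ>L asl =
       (idL \<otimes>L mS) \<circ>L asr \<circ>L (tauC \<otimes>L idL) \<circ>L asl \<circ>L (idL \<otimes>L tauC) \<and>
     tauC \<circ>L (idL \<otimes>L rhoC) =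
       (rhoC \<otimes>L idL) \<circ>L asl \<circ>L (idL \<otimes>L asl) \<circ>L (idL \<otimes>L (idL \<otimes>L tau)) \<circ>L mid4 tauC
         \<circ>L asr \<circ>L (tau \<otimes>L idL) \<circ>L asl"

definition compatible_S :: "('r \<times> 'r, 'r, 'k::field) lm \<Rightarrow> ('s \<times> 's, 's, 'k) lm \<Rightarrow>
    ('s \<times> 'r, 'r \<times> 's, 'k) lm \<Rightarrow> ('d \<Rightarrow> nat) \<Rightarrow> ('d, 'd, 'k) lm \<Rightarrow> ('d, 's, 'k) lm \<Rightarrow>
    ('s \<times> ('d \<times> 's), 'd, 'k) lm \<Rightarrow> ('d \<times> 'r, 'r \<times> 'd, 'k) lm \<Rightarrow> bool" where
  "compatible_S mR mS tau degD dD eD rhoD tauD \<longleftrightarrow>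
     bij (ext tauD) \<and>
     (\<forall>d r. \<forall>p\<in>Poly_Mapping.keys (tauD (d,r)). degD (snd p) = degD d) \<and>
     (idL \<otimes>L dD) \<circ>L tauD = tauD \<circ>L (dD \<otimes>L idL) \<and>
     (idL \<otimes>L eD) \<circ>L tauD = tau \<circ>L (eD \<otimes>L idL) \<and>
     tauD \<circ>L (idL \<otimes>L mR) =
       (mR \<otimes>L idL) \<circ>L asl \<circ>L (idL \<otimes>L tauD) \<circ>L asr \<circ>L (tauD \<otimes>L idL) \<circ>L asl \<and>
     tauD \<circ>L (rhoD \<otimes>L idL) \<circ>L asl \<circ>L (idL \<otimes>L asl) =
       (idL \<otimes>L rhoD) \<circ>L asr \<circ>L (tau \<otimes>L idL) \<circ>L asl \<circ>L mid4 tauD \<circ>L (idL \<otimes>L (idL \<otimes>L tau))"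

definition tw_deg :: "('c \<Rightarrow> nat) \<Rightarrow> ('d \<Rightarrow> nat) \<Rightarrow> 'c \<times> 'd \<Rightarrow> nat" where
  "tw_deg degC degD = (\<lambda>(c,d). degC c + degD d)"

definition tw_diff :: "('c \<Rightarrow> nat) \<Rightarrow> ('c, 'c, 'k::field) lm \<Rightarrow> ('d, 'd, 'k) lm \<Rightarrow> ('c \<times> 'd, 'c \<times> 'd, 'k) lm" where
  "tw_diff degC dC dD = (\<lambda>(c,d). tens (dC c) (basis d) + smul ((-1) ^ degC c) (tens (basis c) (dD d)))"

definition tw_aug :: "('c, 'r, 'k::field) lm \<Rightarrow> ('d, 's, 'k) lm \<Rightarrow> ('c \<times> 'd, 'r \<times> 's, 'k) lm" where
  "tw_aug eC eD = eC \<otimes>L eD"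

definition tw_g1 :: "(('r \<times> 's) \<times> (('c \<times> 'd) \<times> ('r \<times> 's)), 'r \<times> ((('s \<times> 'c) \<times> ('d \<times> 'r)) \<times> 's), 'k::field) lm" where
  "tw_g1 = (\<lambda>((r,s),((c,d),(r',s'))). basis (r,(((s,c),(d,r')),s')))"

definition tw_g2 :: "('r \<times> ((('c \<times> 's) \<times> ('r \<times> 'd)) \<times> 's), 'r \<times> ('c \<times> (('s \<times> 'r) \<times> ('d \<times> 's))), 'k::field) lm" where
  "tw_g2 = (\<lambda>(r,(((c,s),(r',d)),s')). basis (r,(c,((s,r'),(d,s')))))"

definition tw_g3 :: "('r \<times> ('c \<times> (('r \<times> 's) \<times> ('d \<times> 's))), ('r \<times> ('c \<times> 'r)) \<times> ('s \<times> ('d \<times> 's)), 'k::field) lm" where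
  "tw_g3 = (\<lambda>(r,(c,((r',s),(d,s')))). basis ((r,(c,r')),(s,(d,s'))))"

text \<open>(R\<otimes>_tau S)-bimodule structure (rho_C \<otimes> rho_D)(1\<otimes>1\<otimes>tau\<otimes>1\<otimes>1)(1\<otimes>tau_C\<otimes>tau_D\<otimes>1).\<close>
definition tw_act :: "('s \<times> 'r, 'r \<times> 's, 'k::field) lm \<Rightarrow> ('r \<times> ('c \<times> 'r), 'c, 'k) lm \<Rightarrow>
    ('s \<times> ('d \<times> 's), 'd, 'k) lm \<Rightarrow> ('s \<times> 'c, 'c \<times> 's, 'k) lm \<Rightarrow> ('d \<times> 'r, 'r \<times> 'd, 'k) lm \<Rightarrow>
    (('r \<times> 's) \<times> (('c \<times> 'd) \<times> ('r \<times> 's)), 'c \<times> 'd, 'k) lm" where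
  "tw_act tau rhoC rhoD tauC tauD =
     (rhoC \<otimes>L rhoD) \<circ>L tw_g3 \<circ>L (idL \<otimes>L (idL \<otimes>L (tau \<otimes>L idL))) \<circ>L tw_g2
       \<circ>L (idL \<otimes>L ((tauC \<otimes>L tauD) \<otimes>L idL)) \<circ>L tw_g1"

end

theory Submission
  imports Defs
begin

text \<open>Every structure map of the twisted product resolution is assembled from the structure
  maps of the two factors by tensor products, composition and fixed regroupings of tensor
  factors, and a tensor product of linear maps is natural with respect to all of these.
  Hence \<open>\<psi>\<^sub>R \<otimes> \<psi>\<^sub>S\<close> commutes with the total differential (since \<open>\<psi>\<^sub>R\<close> preserves degrees, the
  Koszul sign passes through it), with the augmentation, and with the twisted bimodule
  action, where the compatibility of \<open>\<psi>\<^sub>R\<close>, \<open>\<psi>\<^sub>S\<close> with \<open>\<tau>\<^sub>C\<close>, \<open>\<tau>\<^sub>D\<close> moves it past the twists.\<close>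

lemma lookup_smul [simp]: "Poly_Mapping.lookup (smul c u) x = c * Poly_Mapping.lookup u x"
  by (simp add: smul_def Poly_Mapping.map.rep_eq when_def)

lemma smul_zero [simp]: "smul c 0 = 0"
  by (rule poly_mapping_eqI) simp

lemma smul_add: "smul c (u + v) = smul c u + smul c v"
  by (rule poly_mapping_eqI) (simp add: lookup_add distrib_left)

lemma smul_smul: "smul c (smul c' u) = smul (c * c') u"
  by (rule poly_mapping_eqI) (simp add: mult.assoc)

lemma smul_sum: "smul c (sum g A) = (\<Sum>a\<in>A. smul c (g a))"
  by (induction A rule: infinite_finite_induct) (auto simp: smul_add)

lemma poly_mapping_eq_pairI:
  "(\<And>a b. Poly_Mapping.lookup u (a, b) = Poly_Mapping.lookup v (a, b)) \<Longrightarrow> u = v"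
  by (rule poly_mapping_eqI) auto

lemma lookup_tens [simp]:
  "Poly_Mapping.lookup (tens u v) (a, b) = Poly_Mapping.lookup u a * Poly_Mapping.lookup v b"
proof -
  have "Poly_Mapping.lookup (tens u v) (a, b) =
      (\<Sum>p\<in>Poly_Mapping.keys u \<times> Poly_Mapping.keys v.
         if p = (a, b) then Poly_Mapping.lookup u (fst p) * Poly_Mapping.lookup v (snd p) else 0)"
    unfolding tens_def lookup_sum lookup_single when_def sum.cartesian_product
    by (intro sum.cong refl) (auto simp: lookup_single when_def split: if_splits)
  also have "\<dots> = Poly_Mapping.lookup u a * Poly_Mapping.lookup v b"
    by (subst sum.delta) (auto simp: in_keys_iff)
  finally show ?thesis .
qed

lemma keys_tens_subset: "Poly_Mapping.keys (tens u v) \<subseteq> Poly_Mapping.keys u \<times> Poly_Mapping.keys v"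
  by (auto simp: in_keys_iff)

lemma tens_basis: "tens (basis a) (basis b) = basis (a, b)"
  by (rule poly_mapping_eq_pairI) (simp add: basis_def lookup_single when_def)

lemma lookup_ext_superset:
  assumes "finite A" and "Poly_Mapping.keys u \<subseteq> A"
  shows "Poly_Mapping.lookup (ext f u) y = (\<Sum>a\<in>A. Poly_Mapping.lookup u a * Poly_Mapping.lookup (f a) y)"
proof -
  have "ext f u = (\<Sum>a\<in>A. smul (Poly_Mapping.lookup u a) (f a))"
    unfolding ext_def using assms
    by (intro sum.mono_neutral_left) (auto simp: in_keys_iff intro!: poly_mapping_eqI)
  then show ?thesis
    by (simp add: lookup_sum)
qed

lemma lookup_ext:
  "Poly_Mapping.lookup (ext f u) y =
     (\<Sum>a\<in>Poly_Mapping.keys u. Poly_Mapping.lookup u a * Poly_Mapping.lookup (f a) y)"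
  by (simp add: lookup_ext_superset)

lemma ext_add: "ext f (u + v) = ext f u + ext f v"
proof (rule poly_mapping_eqI)
  fix y
  let ?A = "Poly_Mapping.keys u \<union> Poly_Mapping.keys v"
  have "Poly_Mapping.keys (u + v) \<subseteq> ?A"
    by (auto simp: in_keys_iff lookup_add)
  then show "Poly_Mapping.lookup (ext f (u + v)) y = Poly_Mapping.lookup (ext f u + ext f v) y"
    by (simp add: lookup_add lookup_ext_superset[of ?A] distrib_right sum.distrib)
qed

lemma ext_smul: "ext f (smul c u) = smul c (ext f u)"
proof (rule poly_mapping_eqI)
  fix y
  have "Poly_Mapping.keys (smul c u) \<subseteq> Poly_Mapping.keys u"
    by (auto simp: in_keys_iff)
  then have "Poly_Mapping.lookup (ext f (smul c u)) y =
      (\<Sum>a\<in>Poly_Mapping.keys u. Poly_Mapping.lookup (smul c u) a * Poly_Mapping.lookup (f a) y)"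
    by (rule lookup_ext_superset[OF finite_keys])
  then show "Poly_Mapping.lookup (ext f (smul c u)) y = Poly_Mapping.lookup (smul c (ext f u)) y"
    by (simp add: lookup_ext sum_distrib_left mult.assoc)
qed

lemma ext_zero [simp]: "ext f 0 = 0"
  by (simp add: ext_def)

lemma ext_sum: "ext f (sum g A) = (\<Sum>a\<in>A. ext f (g a))"
  by (induction A rule: infinite_finite_induct) (auto simp: ext_add)

lemma ext_basis [simp]: "ext f (basis a) = f a"
  by (simp add: ext_def basis_def smul_def poly_mapping_eqI Poly_Mapping.map.rep_eq when_def)

lemma ext_idL [simp]: "ext idL u = u"
proof (rule poly_mapping_eqI)
  fix x
  have "Poly_Mapping.lookup (ext idL u) x =
      (\<Sum>a\<in>Poly_Mapping.keys u. if a = x then Poly_Mapping.lookup u a else 0)"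
    unfolding lookup_ext by (intro sum.cong refl) (simp add: idL_def basis_def lookup_single when_def)
  also have "\<dots> = Poly_Mapping.lookup u x"
    by (subst sum.delta) (auto simp: in_keys_iff)
  finally show "Poly_Mapping.lookup (ext idL u) x = Poly_Mapping.lookup u x" .
qed

lemma ext_add_fun: "ext (\<lambda>x. f x + g x) u = ext f u + ext g u"
  unfolding ext_def by (simp add: smul_add sum.distrib)

lemma ext_smul_fun_const_on_keys:
  "(\<forall>a\<in>Poly_Mapping.keys u. h a = c) \<Longrightarrow> ext (\<lambda>x. smul (h x) (f x)) u = smul c (ext f u)"
  unfolding ext_def by (simp add: smul_sum smul_smul mult.commute)

lemma ext_relabel:
  assumes "\<And>x. \<sigma> (\<pi> x) = x" and "\<And>y. \<pi> (\<sigma> y) = y"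
  shows "Poly_Mapping.lookup (ext (\<lambda>x. basis (\<pi> x)) u) y = Poly_Mapping.lookup u (\<sigma> y)"
proof -
  have "Poly_Mapping.lookup (ext (\<lambda>x. basis (\<pi> x)) u) y =
      (\<Sum>a\<in>Poly_Mapping.keys u. if a = \<sigma> y then Poly_Mapping.lookup u a else 0)"
    unfolding lookup_ext basis_def lookup_single when_def
    by (intro sum.cong refl) (metis assms mult.right_neutral mult_zero_right)
  also have "\<dots> = Poly_Mapping.lookup u (\<sigma> y)"
    by (simp add: in_keys_iff)
  finally show ?thesis .
qed

lemma ext_compL: "ext (g \<circ>L f) u = ext g (ext f u)"
  unfolding ext_def[of "g \<circ>L f" u] ext_def[of f u] by (simp add: ext_sum ext_smul compL_def)

lemma compL_assoc: "(h \<circ>L g) \<circ>L f = h \<circ>L (g \<circ>L f)"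
  unfolding compL_def[of "h \<circ>L g" f] ext_compL by (simp add: compL_def)

lemma compL_assoc_cong: "f \<circ>L g = f' \<circ>L g' \<Longrightarrow> f \<circ>L (g \<circ>L h) = f' \<circ>L (g' \<circ>L h)"
  by (metis compL_assoc)

lemma idL_compL [simp]: "idL \<circ>L f = f"
  by (simp add: compL_def)

lemma compL_idL [simp]: "f \<circ>L idL = f"
  by (simp add: compL_def idL_def)

lemma tensL_apply [simp]: "(f \<otimes>L g) (a, b) = tens (f a) (g b)"
  by (simp add: tensL_def)

lemma idL_tensL_idL [simp]: "idL \<otimes>L idL = idL"
  by (simp add: tensL_def idL_def tens_basis fun_eq_iff)

lemma ext_tensL_tens: "ext (f \<otimes>L g) (tens u v) = tens (ext f u) (ext g v)"
proof (rule poly_mapping_eq_pairI)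
  fix a b
  have "Poly_Mapping.lookup (ext (f \<otimes>L g) (tens u v)) (a, b) =
      (\<Sum>p\<in>Poly_Mapping.keys u \<times> Poly_Mapping.keys v.
         Poly_Mapping.lookup (tens u v) p * Poly_Mapping.lookup ((f \<otimes>L g) p) (a, b))"
    by (rule lookup_ext_superset[OF _ keys_tens_subset]) simp
  then show "Poly_Mapping.lookup (ext (f \<otimes>L g) (tens u v)) (a, b) =
      Poly_Mapping.lookup (tens (ext f u) (ext g v)) (a, b)"
    unfolding sum.cartesian_product'
    by (simp add: lookup_ext sum_product sum_distrib_left sum_distrib_right mult_ac)
      (rule sum.swap)
qed

lemma tensL_compL: "(f \<otimes>L g) \<circ>L (h \<otimes>L k) = (f \<circ>L h) \<otimes>L (g \<circ>L k)"
  by (simp add: compL_def fun_eq_iff ext_tensL_tens)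

lemma tw_g1_apply: "tw_g1 ((r, s), ((c, d), (r', s'))) = basis (r, (((s, c), (d, r')), s'))"
  by (simp add: tw_g1_def)

lemma tw_g2_apply: "tw_g2 (r, (((c, s), (r', d)), s')) = basis (r, (c, ((s, r'), (d, s'))))"
  by (simp add: tw_g2_def)

lemma tw_g3_apply: "tw_g3 (r, (c, ((r', s), (d, s')))) = basis ((r, (c, r')), (s, (d, s')))"
  by (simp add: tw_g3_def)

lemma lookup_ext_tw_g1:
  "Poly_Mapping.lookup (ext tw_g1 u) (r, (((s, c), (d, r')), s')) =
     Poly_Mapping.lookup u ((r, s), ((c, d), (r', s')))"
proof -
  have regroup: "tw_g1 = (\<lambda>x. basis ((\<lambda>((r,s),((c,d),(r',s'))). (r,(((s,c),(d,r')),s'))) x))"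
    by (simp add: tw_g1_def fun_eq_iff split_paired_all)
  show ?thesis
    unfolding regroup by (subst ext_relabel[where \<sigma>="\<lambda>(r,(((s,c),(d,r')),s')). ((r,s),((c,d),(r',s')))"], auto)
qed

lemma lookup_ext_tw_g2:
  "Poly_Mapping.lookup (ext tw_g2 u) (r, (c, ((s, r'), (d, s')))) =
     Poly_Mapping.lookup u (r, (((c, s), (r', d)), s'))"
proof -
  have regroup: "tw_g2 = (\<lambda>x. basis ((\<lambda>(r,(((c,s),(r',d)),s')). (r,(c,((s,r'),(d,s'))))) x))"
    by (simp add: tw_g2_def fun_eq_iff split_paired_all)
  show ?thesis
    unfolding regroup by (subst ext_relabel[where \<sigma>="\<lambda>(r,(c,((s,r'),(d,s')))). (r,(((c,s),(r',d)),s'))"], auto)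
qed

lemma lookup_ext_tw_g3:
  "Poly_Mapping.lookup (ext tw_g3 u) ((r, (c, r')), (s, (d, s'))) =
     Poly_Mapping.lookup u (r, (c, ((r', s), (d, s'))))"
proof -
  have regroup: "tw_g3 = (\<lambda>x. basis ((\<lambda>(r,(c,((r',s),(d,s')))). ((r,(c,r')),(s,(d,s')))) x))"
    by (simp add: tw_g3_def fun_eq_iff split_paired_all)
  show ?thesis
    unfolding regroup by (subst ext_relabel[where \<sigma>="\<lambda>((r,(c,r')),(s,(d,s'))). (r,(c,((r',s),(d,s'))))"], auto)
qed

lemma tw_g1_natural:
  "tw_g1 \<circ>L ((a \<otimes>L b) \<otimes>L ((c \<otimes>L d) \<otimes>L (e \<otimes>L f))) =
     (a \<otimes>L (((b \<otimes>L c) \<otimes>L (d \<otimes>L e)) \<otimes>L f)) \<circ>L tw_g1"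
  unfolding fun_eq_iff compL_def
  by (auto intro!: poly_mapping_eqI simp: lookup_ext_tw_g1 tw_g1_apply mult_ac)

lemma tw_g2_natural:
  "tw_g2 \<circ>L (a \<otimes>L (((b \<otimes>L c) \<otimes>L (d \<otimes>L e)) \<otimes>L f)) =
     (a \<otimes>L (b \<otimes>L ((c \<otimes>L d) \<otimes>L (e \<otimes>L f)))) \<circ>L tw_g2"
  unfolding fun_eq_iff compL_def
  by (auto intro!: poly_mapping_eqI simp: lookup_ext_tw_g2 tw_g2_apply mult_ac)

lemma tw_g3_natural:
  "tw_g3 \<circ>L (a \<otimes>L (b \<otimes>L ((c \<otimes>L d) \<otimes>L (e \<otimes>L f)))) =
     ((a \<otimes>L (b \<otimes>L c)) \<otimes>L (d \<otimes>L (e \<otimes>L f))) \<circ>L tw_g3"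
  unfolding fun_eq_iff compL_def
  by (auto intro!: poly_mapping_eqI simp: lookup_ext_tw_g3 tw_g3_apply mult_ac)

lemma homog_tensL_tw_deg:
  assumes "\<And>c. homog degC' (degC c) (f c)" and "\<And>d. homog degD' (degD d) (g d)"
  shows "homog (tw_deg degC' degD') (tw_deg degC degD x) ((f \<otimes>L g) x)"
  using assms keys_tens_subset[of "f (fst x)" "g (snd x)"]
  by (cases x) (fastforce simp: homog_def tw_deg_def)

lemma tw_diff_natural:
  fixes f :: "('c, 'c2, 'k::field) lm" and g :: "('d, 'd2, 'k) lm"
  assumes hom: "\<And>c. homog degC' (degC c) (f c)"
    and dC: "dC' \<circ>L f = f \<circ>L dC" and dD: "dD' \<circ>L g = g \<circ>L dD"
  shows "tw_diff degC' dC' dD' \<circ>L (f \<otimes>L g) = (f \<otimes>L g) \<circ>L tw_diff degC dC dD"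
proof
  fix x :: "'c \<times> 'd"
  obtain c d where x: "x = (c, d)"
    by (cases x)
  have tw_diff_split: "tw_diff degC' dC' dD' =
      (\<lambda>y. (dC' \<otimes>L idL) y + smul ((-1) ^ degC' (fst y)) ((idL \<otimes>L dD') y))"
    by (simp add: tw_diff_def fun_eq_iff idL_def)
  have sign: "\<forall>y\<in>Poly_Mapping.keys (tens (f c) (g d)). (-1) ^ degC' (fst y) = ((-1) ^ degC c :: 'k)"
    using keys_tens_subset[of "f c" "g d"] hom[of c] by (auto simp: homog_def)
  have "ext dC' (f c) = ext f (dC c)" and "ext dD' (g d) = ext g (dD d)"
    using dC dD by (simp_all add: compL_def fun_eq_iff)
  then show "(tw_diff degC' dC' dD' \<circ>L (f \<otimes>L g)) x = ((f \<otimes>L g) \<circ>L tw_diff degC dC dD) x"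
    unfolding x compL_def tensL_apply tw_diff_split ext_add_fun
      ext_smul_fun_const_on_keys[OF sign] ext_tensL_tens
    by (simp add: tw_diff_def ext_add ext_smul ext_tensL_tens)
qed

lemma tw_aug_natural:
  "eC' \<circ>L f = eC \<Longrightarrow> eD' \<circ>L g = eD \<Longrightarrow> tw_aug eC' eD' \<circ>L (f \<otimes>L g) = tw_aug eC eD"
  by (simp add: tw_aug_def tensL_compL)

lemma tw_act_natural:
  assumes rhoC: "f \<circ>L rhoC = rhoC' \<circ>L (idL \<otimes>L (f \<otimes>L idL))"
    and rhoD: "g \<circ>L rhoD = rhoD' \<circ>L (idL \<otimes>L (g \<otimes>L idL))"
    and tauC: "(f \<otimes>L idL) \<circ>L tauC = tauC' \<circ>L (idL \<otimes>L f)"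
    and tauD: "(idL \<otimes>L g) \<circ>L tauD = tauD' \<circ>L (g \<otimes>L idL)"
  shows "(f \<otimes>L g) \<circ>L tw_act tau rhoC rhoD tauC tauD =
    tw_act tau rhoC' rhoD' tauC' tauD' \<circ>L (idL \<otimes>L ((f \<otimes>L g) \<otimes>L idL))"
proof -
  have through_g1: "tw_g1 \<circ>L (idL \<otimes>L ((f \<otimes>L g) \<otimes>L idL)) =
      (idL \<otimes>L (((idL \<otimes>L f) \<otimes>L (g \<otimes>L idL)) \<otimes>L idL)) \<circ>L tw_g1"
    using tw_g1_natural[of idL idL f g idL idL] by simp
  have through_twists:
    "(idL \<otimes>L ((tauC' \<otimes>L tauD') \<otimes>L idL)) \<circ>L (idL \<otimes>L (((idL \<otimes>L f) \<otimes>L (g \<otimes>L idL)) \<otimes>L idL)) =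
     (idL \<otimes>L (((f \<otimes>L idL) \<otimes>L (idL \<otimes>L g)) \<otimes>L idL)) \<circ>L (idL \<otimes>L ((tauC \<otimes>L tauD) \<otimes>L idL))"
    by (simp add: tensL_compL tauC tauD)
  have through_g2: "tw_g2 \<circ>L (idL \<otimes>L (((f \<otimes>L idL) \<otimes>L (idL \<otimes>L g)) \<otimes>L idL)) =
      (idL \<otimes>L (f \<otimes>L (idL \<otimes>L (g \<otimes>L idL)))) \<circ>L tw_g2"
    using tw_g2_natural[of idL f idL idL g idL] by simp
  have through_tau:
    "(idL \<otimes>L (idL \<otimes>L (tau \<otimes>L idL))) \<circ>L (idL \<otimes>L (f \<otimes>L (idL \<otimes>L (g \<otimes>L idL)))) =
     (idL \<otimes>L (f \<otimes>L (idL \<otimes>L (g \<otimes>L idL)))) \<circ>L (idL \<otimes>L (idL \<otimes>L (tau \<otimes>L idL)))"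
    by (simp add: tensL_compL)
  have through_g3: "tw_g3 \<circ>L (idL \<otimes>L (f \<otimes>L (idL \<otimes>L (g \<otimes>L idL)))) =
      ((idL \<otimes>L (f \<otimes>L idL)) \<otimes>L (idL \<otimes>L (g \<otimes>L idL))) \<circ>L tw_g3"
    using tw_g3_natural[of idL f idL idL g idL] by simp
  have through_rho:
    "(rhoC' \<otimes>L rhoD') \<circ>L ((idL \<otimes>L (f \<otimes>L idL)) \<otimes>L (idL \<otimes>L (g \<otimes>L idL))) =
     (f \<otimes>L g) \<circ>L (rhoC \<otimes>L rhoD)"
    by (simp add: tensL_compL rhoC rhoD)
  show ?thesis
    unfolding tw_act_def
    by (simp only: compL_assoc through_g1 compL_assoc_cong[OF through_twists]
        compL_assoc_cong[OF through_g2] compL_assoc_cong[OF through_tau]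
        compL_assoc_cong[OF through_g3] compL_assoc_cong[OF through_rho])
qed

theorem lemma7p3:
  fixes mR :: "('r \<times> 'r, 'r, 'k::field) lm" and uR :: "'r \<Rightarrow>\<^sub>0 'k"
    and mS :: "('s \<times> 's, 's, 'k) lm" and uS :: "'s \<Rightarrow>\<^sub>0 'k"
    and tau :: "('s \<times> 'r, 'r \<times> 's, 'k) lm"
    and degC :: "'c \<Rightarrow> nat" and dC :: "('c, 'c, 'k) lm" and eC :: "('c, 'r, 'k) lm"
    and rhoC :: "('r \<times> ('c \<times> 'r), 'c, 'k) lm" and tauC :: "('s \<times> 'c, 'c \<times> 's, 'k) lm"
    and degC' :: "'c2 \<Rightarrow> nat" and dC' :: "('c2, 'c2, 'k) lm" and eC' :: "('c2, 'r, 'k) lm"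
    and rhoC' :: "('r \<times> ('c2 \<times> 'r), 'c2, 'k) lm" and tauC' :: "('s \<times> 'c2, 'c2 \<times> 's, 'k) lm"
    and degD :: "'d \<Rightarrow> nat" and dD :: "('d, 'd, 'k) lm" and eD :: "('d, 's, 'k) lm"
    and rhoD :: "('s \<times> ('d \<times> 's), 'd, 'k) lm" and tauD :: "('d \<times> 'r, 'r \<times> 'd, 'k) lm"
    and degD' :: "'d2 \<Rightarrow> nat" and dD' :: "('d2, 'd2, 'k) lm" and eD' :: "('d2, 's, 'k) lm"
    and rhoD' :: "('s \<times> ('d2 \<times> 's), 'd2, 'k) lm" and tauD' :: "('d2 \<times> 'r, 'r \<times> 'd2, 'k) lm"
    and psiR :: "('c, 'c2, 'k) lm" and psiS :: "('d, 'd2, 'k) lm"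
  assumes char: "CHAR('k) \<noteq> 2"
    and algR: "k_algebra mR uR" and algS: "k_algebra mS uS"
    and tw: "twisting_map mR uR mS uS tau"
    and resC: "bimod_resolution mR uR degC dC eC rhoC"
    and resC': "bimod_resolution mR uR degC' dC' eC' rhoC'"
    and resD: "bimod_resolution mS uS degD dD eD rhoD"
    and resD': "bimod_resolution mS uS degD' dD' eD' rhoD'"
    and cC: "compatible_R mR mS tau degC dC eC rhoC tauC"
    and cC': "compatible_R mR mS tau degC' dC' eC' rhoC' tauC'"
    and cD: "compatible_S mR mS tau degD dD eD rhoD tauD"
    and cD': "compatible_S mR mS tau degD' dD' eD' rhoD' tauD'"
    and psiR: "res_map degC dC eC rhoC degC' dC' eC' rhoC' psiR"
    and psiS: "res_map degD dD eD rhoD degD' dD' eD' rhoD' psiS"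
    and psiR_tw: "(psiR \<otimes>L idL) \<circ>L tauC = tauC' \<circ>L (idL \<otimes>L psiR)"
    and psiS_tw: "(idL \<otimes>L psiS) \<circ>L tauD = tauD' \<circ>L (psiS \<otimes>L idL)"
  shows "res_map (tw_deg degC degD) (tw_diff degC dC dD) (tw_aug eC eD) (tw_act tau rhoC rhoD tauC tauD)
                 (tw_deg degC' degD') (tw_diff degC' dC' dD') (tw_aug eC' eD') (tw_act tau rhoC' rhoD' tauC' tauD')
                 (psiR \<otimes>L psiS)"
proof -
  from psiR have homR: "\<And>c. homog degC' (degC c) (psiR c)" and dR: "dC' \<circ>L psiR = psiR \<circ>L dC"
    and eR: "eC' \<circ>L psiR = eC" and rhoR: "psiR \<circ>L rhoC = rhoC' \<circ>L (idL \<otimes>L (psiR \<otimes>L idL))"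
    unfolding res_map_def by auto
  from psiS have homS: "\<And>d. homog degD' (degD d) (psiS d)" and dS: "dD' \<circ>L psiS = psiS \<circ>L dD"
    and eS: "eD' \<circ>L psiS = eD" and rhoS: "psiS \<circ>L rhoD = rhoD' \<circ>L (idL \<otimes>L (psiS \<otimes>L idL))"
    unfolding res_map_def by auto
  show ?thesis
    unfolding res_map_def
    by (intro conjI allI homog_tensL_tw_deg[OF homR homS] tw_diff_natural[OF homR dR dS]
        tw_aug_natural[OF eR eS] tw_act_natural[OF rhoR rhoS psiR_tw psiS_tw])
qed

end
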